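(* Let $X$ be a real $n\times p$ matrix ($p<n$) of full rank, let $\sigma>0$, $f\in\mathbb{R}^p$, $z\in\mathbb{R}^n$, and $y=Xf+z$. Let $z=X\bar g+\bar b$ be the unique decomposition with $\bar g\in\mathbb{R}^p$ and $\bar b\in\ker X^\top$, and set $f_n=f+\bar g$. If $\|\bar b\|_\infty<\sigma$, then $(f_n,\bar b)$ is the unique solution of $$\min_{(g,b)\in\mathbb{R}^p\times\mathbb{R}^n}\ \sigma\|y-Xg-b\|_1+\tfrac12\|b\|_2^2.$$
   Context: $f_n$ is the least squares estimator $(X^\top X)^{-1}X^\top y$. *)

theory Defs
  imports "HOL-Analysis.Analysis"
begin

definition l1_norm :: "real^'n \<Rightarrow> real" where
  "l1_norm v = (\<Sum>i\<in>UNIV. \<bar>v $ i\<bar>)"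

definition linf_norm :: "real^'n \<Rightarrow> real" where
  "linf_norm v = Max (range (\<lambda>i. \<bar>v $ i\<bar>))"

end

theory Submission
  imports Defs
begin

text \<open>With \<open>c = f + gbar\<close> we have \<open>y = X c + bbar\<close>, so \<open>(c, bbar)\<close> has zero residual.
  For any other \<open>(g, b)\<close> with residual \<open>r = y - X g - b\<close>, orthogonality of \<open>bbar\<close> to the
  range of \<open>X\<close> gives \<open>\<langle>bbar, b - bbar\<rangle> = -\<langle>bbar, r\<rangle>\<close>, hence by Hoelder's inequality
  the objective exceeds its value at \<open>(c, bbar)\<close> by at least
  \<open>(\<sigma> - |bbar|_\<infinity>) |r|_1 + |b - bbar|^2/2\<close>.
  When \<open>|bbar|_\<infinity> < \<sigma>\<close> equality forces \<open>r = 0\<close> and \<open>b = bbar\<close>, and then \<open>g = c\<close>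
  because a full-rank \<open>X\<close> is injective.\<close>

definition objective :: "real \<Rightarrow> real^'p^'n \<Rightarrow> real^'n \<Rightarrow> real^'p \<Rightarrow> real^'n \<Rightarrow> real" where
  "objective \<sigma> X y g b = \<sigma> * l1_norm (y - X *v g - b) + (1/2) * (norm b)^2"

lemma abs_nth_le_linf_norm: "\<bar>v $ i\<bar> \<le> linf_norm (v::real^'n)"
  unfolding linf_norm_def by (rule Max_ge) auto

lemma l1_norm_nonneg: "0 \<le> l1_norm (v::real^'n)"
  unfolding l1_norm_def by (simp add: sum_nonneg)

lemma l1_norm_eq_0_iff: "l1_norm (v::real^'n) = 0 \<longleftrightarrow> v = 0"
  unfolding l1_norm_def by (subst sum_nonneg_eq_0_iff) (auto simp: vec_eq_iff)

lemma abs_inner_le_linf_norm_l1_norm: "\<bar>inner (b::real^'n) r\<bar> \<le> linf_norm b * l1_norm r"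
proof -
  have "\<bar>inner b r\<bar> = \<bar>\<Sum>i\<in>UNIV. b$i * r$i\<bar>" by (simp add: inner_vec_def)
  also have "\<dots> \<le> (\<Sum>i\<in>UNIV. \<bar>b$i * r$i\<bar>)" by (rule sum_abs)
  also have "\<dots> \<le> (\<Sum>i\<in>UNIV. linf_norm b * \<bar>r$i\<bar>)"
    by (rule sum_mono) (simp add: abs_mult mult_right_mono abs_nth_le_linf_norm)
  also have "\<dots> = linf_norm b * l1_norm r" by (simp add: l1_norm_def sum_distrib_left)
  finally show ?thesis .
qed

lemma inner_eq_0_if_transpose_mult_eq_0:
  fixes X :: "real^'p^'n"
  assumes "transpose X *v b = 0"
  shows "inner b (X *v h) = 0"
proof -
  have "inner b (X *v h) = inner (b v* X) h" by (simp add: dot_lmul_matrix)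
  also have "b v* X = 0" using assms by simp
  finally show ?thesis by simp
qed

lemma objective_excess_lower_bound:
  assumes y: "y = X *v c + b0" and orth: "transpose X *v b0 = 0"
  shows "objective \<sigma> X y c b0 + (\<sigma> - linf_norm b0) * l1_norm (y - X *v g - b)
           + (1/2) * (norm (b - b0))^2 \<le> objective \<sigma> X y g b"
proof -
  define r where "r = y - X *v g - b"
  define d where "d = b - b0"
  have r: "r = X *v (c - g) - d"
    unfolding r_def d_def y by (simp add: matrix_vector_mult_diff_distrib algebra_simps)
  have "inner b0 d = - inner b0 r"
    using inner_eq_0_if_transpose_mult_eq_0[OF orth, of "c - g"] by (simp add: r inner_diff_right)
  moreover have "(norm b)^2 = (norm b0)^2 + 2 * inner b0 d + (norm d)^2"
    by (simp add: d_def power2_norm_eq_inner inner_diff_left inner_diff_right inner_commute)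
  moreover have "inner b0 r \<le> linf_norm b0 * l1_norm r"
    using abs_inner_le_linf_norm_l1_norm[of b0 r] by linarith
  moreover have "objective \<sigma> X y c b0 = (1/2) * (norm b0)^2"
    by (simp add: objective_def y l1_norm_eq_0_iff)
  moreover have "(\<sigma> - linf_norm b0) * l1_norm r = \<sigma> * l1_norm r - linf_norm b0 * l1_norm r"
    by (simp add: left_diff_distrib)
  ultimately show ?thesis
    unfolding objective_def r_def[symmetric] d_def[symmetric] by linarith
qed

lemma objective_minimal:
  assumes "y = X *v c + b0" "transpose X *v b0 = 0" "linf_norm b0 \<le> \<sigma>"
  shows "objective \<sigma> X y c b0 \<le> objective \<sigma> X y g b"
proof -
  have "0 \<le> (\<sigma> - linf_norm b0) * l1_norm (y - X *v g - b)"
    using assms(3) by (simp add: l1_norm_nonneg)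
  moreover have "0 \<le> (1/2) * (norm (b - b0))^2" by simp
  ultimately show ?thesis
    using objective_excess_lower_bound[OF assms(1,2), of \<sigma> g b] by linarith
qed

lemma objective_minimizer_unique:
  assumes y: "y = X *v c + b0" and orth: "transpose X *v b0 = 0"
    and "linf_norm b0 < \<sigma>" and inj: "inj ((*v) X)"
    and le: "objective \<sigma> X y g b \<le> objective \<sigma> X y c b0"
  shows "g = c \<and> b = b0"
proof -
  have "0 \<le> (\<sigma> - linf_norm b0) * l1_norm (y - X *v g - b)"
    using assms(3) by (simp add: l1_norm_nonneg)
  moreover have "0 \<le> (norm (b - b0))^2" by simp
  ultimately have "(\<sigma> - linf_norm b0) * l1_norm (y - X *v g - b) = 0" "(norm (b - b0))^2 = 0"
    using objective_excess_lower_bound[OF y orth, of \<sigma> g b] le by linarith+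
  then have "y - X *v g - b = 0" and b: "b = b0"
    using assms(3) by (auto simp: l1_norm_eq_0_iff)
  then have "X *v g = X *v c" by (simp add: y)
  with inj b show ?thesis by (simp add: injD)
qed

theorem proposition4p4:
  fixes X :: "real^'p^'n" and \<sigma> :: real and f gbar :: "real^'p"
    and z y bbar :: "real^'n"
  assumes "CARD('p) < CARD('n)"
    and "rank X = CARD('p)"
    and "\<sigma> > 0"
    and "y = X *v f + z"
    and "z = X *v gbar + bbar"
    and "transpose X *v bbar = 0"
    and "linf_norm bbar < \<sigma>"
  shows "(\<forall>g b. \<sigma> * l1_norm (y - X *v (f + gbar) - bbar) + (1/2) * (norm bbar)^2
                 \<le> \<sigma> * l1_norm (y - X *v g - b) + (1/2) * (norm b)^2)
       \<and> (\<forall>g b. \<sigma> * l1_norm (y - X *v g - b) + (1/2) * (norm b)^2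
                 \<le> \<sigma> * l1_norm (y - X *v (f + gbar) - bbar) + (1/2) * (norm bbar)^2
               \<longrightarrow> g = f + gbar \<and> b = bbar)"
proof -
  have y: "y = X *v (f + gbar) + bbar"
    using assms(4,5) by (simp add: matrix_vector_right_distrib)
  have inj: "inj ((*v) X)"
    using assms(2) full_rank_injective by blast
  show ?thesis
    using objective_minimal[OF y assms(6)] objective_minimizer_unique[OF y assms(6,7) inj]
      assms(7) unfolding objective_def by auto
qed

end
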